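(* Let $\Omega$ be a holomorphic one-form on an open ball $U\subset\mathbb{C}^{2m}$ centered at $0$ containing the closed unit ball $B^{4m}[0,1]$, such that $\Omega\cdot\vec R=0$ where $\vec R=\sum_{j=1}^{2m}z_j\,\partial/\partial z_j$, and such that the origin is the only zero of $\Omega$ in $B^{4m}[0,1]$. Let $A=(a_{ij})$ be the matrix for which the linear part of $\Omega$ at $0$ equals $\Omega_A=\sum_{i,j}a_{ij}z_i\,dz_j$, and assume $A$ is nonsingular. For $t$ in the closed unit disc $\overline{\mathbb{D}}\subset\mathbb{C}$ with $t\ne0$ set $\Omega^t(z)=t^{-1}\Omega(tz)$, and set $\Omega^0=\Omega_A$. Then for every $t\in\overline{\mathbb{D}}$ the only zero of $\Omega^t$ in $B^{4m}[0,1]$ is the origin. *)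

theory Defs
  imports "HOL-Analysis.Analysis"
begin

text \<open>A holomorphic one-form on an open set of C^n is represented by its coefficient
vector field f, i.e. Omega = sum_j f_j(z) dz_j.\<close>
definition holo_on :: "(complex ^ 'n) set \<Rightarrow> (complex ^ 'n \<Rightarrow> complex ^ 'n) \<Rightarrow> bool" where
  "holo_on U f \<longleftrightarrow> (\<forall>z\<in>U. \<exists>D :: complex ^ 'n ^ 'n. (f has_derivative (\<lambda>h. D *v h)) (at z))"

definition contract_R :: "(complex ^ 'n \<Rightarrow> complex ^ 'n) \<Rightarrow> complex ^ 'n \<Rightarrow> complex" where
  "contract_R f z = (\<Sum>j\<in>UNIV. z $ j * f z $ j)"

definition omega_lin :: "complex ^ 'n ^ 'n \<Rightarrow> complex ^ 'n \<Rightarrow> complex ^ 'n" where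
  "omega_lin A z = (\<chi> j. \<Sum>i\<in>UNIV. A $ i $ j * z $ i)"

definition omega_t :: "(complex ^ 'n \<Rightarrow> complex ^ 'n) \<Rightarrow> complex ^ 'n ^ 'n \<Rightarrow> complex \<Rightarrow> complex ^ 'n \<Rightarrow> complex ^ 'n" where
  "omega_t f A t z = (if t = 0 then omega_lin A z else (inverse t) *s f (t *s z))"

end

theory Submission
  imports Defs
begin

text \<open>For \<open>t \<noteq> 0\<close> the rescaled form \<open>\<Omega>\<^sup>t\<close> vanishes at \<open>z\<close> exactly when \<open>\<Omega>\<close> vanishes at
\<open>t z\<close>, and \<open>t z\<close> stays in the closed unit ball when \<open>|t| \<le> 1\<close>; so the zeros of \<open>\<Omega>\<^sup>t\<close> there
are those of \<open>\<Omega>\<close>. For \<open>t = 0\<close> the form \<open>\<Omega>\<^sub>A(z) = z A\<close> vanishes only at the origin because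
\<open>A\<close> is nonsingular.\<close>

lemma norm_vector_scalar_mult:
  fixes x :: "'a::real_normed_field ^ 'n"
  shows "norm (c *s x) = norm c * norm x"
proof -
  have "norm (c *s x) = L2_set (\<lambda>i. norm c * norm (x $ i)) UNIV"
    by (simp add: norm_vec_def norm_mult)
  also have "\<dots> = norm c * norm x"
    by (simp add: L2_set_right_distrib norm_vec_def)
  finally show ?thesis .
qed

lemma vector_scalar_mult_eq_0_iff:
  fixes x :: "'a::field ^ 'n"
  shows "c *s x = 0 \<longleftrightarrow> c = 0 \<or> x = 0"
  by (auto simp: vec_eq_iff)

lemma vector_matrix_mult_eq_0_iff:
  fixes A :: "'a::comm_ring_1 ^ 'n ^ 'n"
  assumes "invertible A"
  shows "x v* A = 0 \<longleftrightarrow> x = 0"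
proof
  obtain B where "A ** B = mat 1"
    using assms unfolding invertible_def by blast
  then have "x = (x v* A) v* B"
    by (simp add: vector_matrix_mul_assoc)
  then show "x v* A = 0 \<Longrightarrow> x = 0"
    by simp
qed simp

lemma omega_lin_eq_vector_matrix_mult: "omega_lin A z = z v* A"
  by (simp add: omega_lin_def vector_matrix_mult_def mult.commute)

lemma omega_t_eq_0_iff:
  assumes "t \<noteq> 0"
  shows "omega_t f A t z = 0 \<longleftrightarrow> f (t *s z) = 0"
  using assms by (simp add: omega_t_def vector_scalar_mult_eq_0_iff)

lemma vector_scalar_mult_in_cball:
  fixes z :: "'a::real_normed_field ^ 'n"
  assumes "norm t \<le> 1" and "z \<in> cball 0 1"
  shows "t *s z \<in> cball 0 1"
  using assms by (simp add: norm_vector_scalar_mult mult_le_one)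

theorem lemma4p11:
  fixes f :: "complex ^ 'n \<Rightarrow> complex ^ 'n"
    and A :: "complex ^ 'n ^ 'n"
    and r :: real
  assumes dim_even: "even CARD('n)"
    and r_gt: "r > 1"
    and holo: "holo_on (ball 0 r) f"
    and radial: "\<forall>z\<in>ball 0 r. contract_R f z = 0"
    and zeros: "\<forall>z\<in>cball 0 1. f z = 0 \<longleftrightarrow> z = 0"
    and linpart: "(f has_derivative omega_lin A) (at 0)"
    and nonsing: "invertible A"
  shows "\<forall>t. cmod t \<le> 1 \<longrightarrow> (\<forall>z\<in>cball 0 1. omega_t f A t z = 0 \<longleftrightarrow> z = 0)"
proof (intro allI impI ballI)
  fix t z
  assume t: "cmod t \<le> 1" and z: "z \<in> cball (0::complex ^ 'n) 1"
  show "omega_t f A t z = 0 \<longleftrightarrow> z = 0"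
  proof (cases "t = 0")
    case True
    then show ?thesis
      using nonsing
      by (simp add: omega_t_def omega_lin_eq_vector_matrix_mult vector_matrix_mult_eq_0_iff)
  next
    case False
    have "omega_t f A t z = 0 \<longleftrightarrow> f (t *s z) = 0"
      using False by (rule omega_t_eq_0_iff)
    also have "\<dots> \<longleftrightarrow> t *s z = 0"
      using zeros vector_scalar_mult_in_cball[OF t z] by blast
    also have "\<dots> \<longleftrightarrow> z = 0"
      using False by (simp add: vector_scalar_mult_eq_0_iff)
    finally show ?thesis .
  qed
qed

end
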